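(* Let $\mu\in\mathcal{P}_2(\mathbb{R}^d)$ and $\mathsf{r}\ge0$, and let $s_{\mathsf r}$ and $m_\mu(\cdot,\mathsf r)$ be as defined in the context. Then: (1) If $s_{\mathsf r}(1)=0$, then $\delta\mapsto m_\mu(\delta,\mathsf r)$ is non-decreasing on $(0,1]$. (2) If $s_{\mathsf r}(1)>0$, then $\delta\mapsto m_\mu(\delta,\mathsf r)$ is either (i) non-increasing on $(0,1]$, or (ii) U-shaped on $(0,1]$, i.e. first non-increasing and then non-decreasing.
   Context: For $\mu\in\mathcal{P}_2(\mathbb{R}^d)$ and SNR $\mathsf r\ge0$, let $\mathbf{Y}_{\mathsf r}:=\mathsf r\mathbf{X}+\mathbf{Z}$ with $\mathbf{X}\sim\mu$ and $\mathbf{Z}\sim\mathcal{N}(0,I_d)$ independent. The localization function is $L_{\mathsf r}(y)=\|\mathrm{Cov}[\mathsf r\mathbf{X}\mid\mathbf{Y}_{\mathsf r}=y]\|_{op}$ and $\mathbf{L}_{\mathsf r}=L_{\mathsf r}(\mathbf{Y}_{\mathsf r})$; its survival function is $s_{\mathsf r}(u):=\mathbb{P}(\mathbf{L}_{\mathsf r}>u)$ for $u\ge0$. For $\delta\in(0,1]$, define $h_\mu(\delta,\mathsf r):=\int_{1-\delta}^\infty s_{\mathsf r}(u)\,du$ and $m_\mu(\delta,\mathsf r):=h_\mu(\delta,\mathsf r)/\delta$. *)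

theory Defs
  imports "HOL-Probability.Probability"
begin

definition std_gauss :: "'a::euclidean_space measure" where
  "std_gauss = density lborel
     (\<lambda>z. ennreal ((2 * pi) powr (- real DIM('a) / 2) * exp (- (norm z)\<^sup>2 / 2)))"

text \<open>Posterior law of X given Y_r = y (regular version, Bayes formula for the
  Gaussian channel Y_r = r X + Z): density proportional to exp(r <x,y> - r^2 |x|^2/2).\<close>
definition post_weight :: "real \<Rightarrow> 'a::euclidean_space \<Rightarrow> 'a \<Rightarrow> real" where
  "post_weight r y x = exp (r * (x \<bullet> y) - r\<^sup>2 * (norm x)\<^sup>2 / 2)"

definition posterior :: "'a::euclidean_space measure \<Rightarrow> real \<Rightarrow> 'a \<Rightarrow> 'a measure" where
  "posterior \<mu> r y = density \<mu>
     (\<lambda>x. ennreal (post_weight r y x / (\<integral>x'. post_weight r y x' \<partial>\<mu>)))"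

definition cov_op :: "'b measure \<Rightarrow> ('b \<Rightarrow> 'a::euclidean_space) \<Rightarrow> 'a \<Rightarrow> 'a" where
  "cov_op P W v = (\<integral>w. (v \<bullet> (W w - (\<integral>w'. W w' \<partial>P))) *\<^sub>R (W w - (\<integral>w'. W w' \<partial>P)) \<partial>P)"

definition loc_fun :: "'a::euclidean_space measure \<Rightarrow> real \<Rightarrow> 'a \<Rightarrow> real" where
  "loc_fun \<mu> r y = onorm (cov_op (posterior \<mu> r y) (\<lambda>x. r *\<^sub>R x))"

definition surv :: "'a::euclidean_space measure \<Rightarrow> real \<Rightarrow> real \<Rightarrow> real" where
  "surv \<mu> r u = measure (\<mu> \<Otimes>\<^sub>M std_gauss)
     {p \<in> space (\<mu> \<Otimes>\<^sub>M std_gauss). loc_fun \<mu> r (r *\<^sub>R fst p + snd p) > u}"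

definition h_fun :: "'a::euclidean_space measure \<Rightarrow> real \<Rightarrow> real \<Rightarrow> real" where
  "h_fun \<mu> \<delta> r = (\<integral>u\<in>{1 - \<delta>..}. surv \<mu> r u \<partial>lborel)"

definition m_fun :: "'a::euclidean_space measure \<Rightarrow> real \<Rightarrow> real \<Rightarrow> real" where
  "m_fun \<mu> \<delta> r = h_fun \<mu> \<delta> r / \<delta>"

end

theory Submission
  imports Defs
begin

text \<open>
  Write \<open>h(\<delta>) = \<integral>\<^bsub>1-\<delta>\<^esub>\<^sup>\<infinity> s\<close> and \<open>\<phi>(\<delta>) = s(1 - \<delta>)\<close>. Since \<open>s\<close> is antitone, the increments of \<open>h\<close>
  on \<open>[0,1]\<close> are squeezed between \<open>\<phi>\<close> at the two endpoints, so \<open>h\<close> is convex with slope \<open>\<phi>\<close>.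
  The sign of the derivative of \<open>m = h/\<delta>\<close> is opposite to that of the tangent intercept
  \<open>h(\<delta>) - \<delta> \<phi>(\<delta>)\<close>, which is antitone and equals \<open>h(0)\<close> at \<open>\<delta> = 0\<close>. If \<open>h(0) = 0\<close> it stays
  nonpositive and \<open>m\<close> increases; if \<open>h(0) > 0\<close> it changes sign at most once, at some \<open>c > 0\<close>,
  and \<open>m\<close> is U-shaped around \<open>c\<close>. Finally \<open>h(0) > 0\<close> iff \<open>s(1) > 0\<close> because a survival
  function is right-continuous; for \<open>s\<close> to be a survival function at all, the localization
  function must be Borel measurable, which holds because it is the operator norm of a
  posterior covariance depending measurably on \<open>y\<close>. Neither \<open>r \<ge> 0\<close> nor the Gaussian law of
  the noise (beyond finiteness) plays a role.
\<close>

section \<open>Ratios of functions with monotone slope\<close>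

context
  fixes h \<phi> :: "real \<Rightarrow> real"
  assumes \<phi>_mono: "mono_on {0..1} \<phi>"
    and slope_bounds: "\<And>x y. 0 \<le> x \<Longrightarrow> x \<le> y \<Longrightarrow> y \<le> 1 \<Longrightarrow>
        (y - x) * \<phi> x \<le> h y - h x \<and> h y - h x \<le> (y - x) * \<phi> y"
begin

definition tangent_intercept :: "real \<Rightarrow> real" where
  "tangent_intercept d = h d - d * \<phi> d"

lemma tangent_intercept_antimono:
  assumes "0 \<le> x" "x \<le> y" "y \<le> 1"
  shows "tangent_intercept y \<le> tangent_intercept x"
proof -
  have "x * \<phi> x \<le> x * \<phi> y"
    using assms by (intro mult_left_mono mono_onD[OF \<phi>_mono]) auto
  then show ?thesis
    using slope_bounds[OF assms] by (simp add: tangent_intercept_def algebra_simps)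
qed

lemma ratio_le_if_intercept_nonpos:
  assumes "0 < x" "x < y" "y \<le> 1" "tangent_intercept x \<le> 0"
  shows "h x / x \<le> h y / y"
proof -
  have "x * ((y - x) * \<phi> x) \<le> x * (h y - h x)"
    using slope_bounds[of x y] assms by (intro mult_left_mono) auto
  then have "0 \<le> x * h y - y * h x"
    using assms mult_nonneg_nonpos[of "y - x" "tangent_intercept x"]
    by (simp add: tangent_intercept_def algebra_simps)
  then show ?thesis using assms by (simp add: field_simps)
qed

lemma ratio_ge_if_intercept_nonneg:
  assumes "0 < x" "x < y" "y \<le> 1" "0 \<le> tangent_intercept y"
  shows "h y / y \<le> h x / x"
proof -
  have "y * (h y - h x) \<le> y * ((y - x) * \<phi> y)"
    using slope_bounds[of x y] assms by (intro mult_left_mono) auto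
  then have "x * h y - y * h x \<le> 0"
    using assms mult_nonneg_nonneg[of "y - x" "tangent_intercept y"]
    by (simp add: tangent_intercept_def algebra_simps)
  then show ?thesis using assms by (simp add: field_simps)
qed

lemma continuous_on_ratio:
  assumes "0 < a"
  shows "continuous_on {a..1} (\<lambda>d. h d / d)"
proof -
  define K where "K = max \<bar>\<phi> 0\<bar> \<bar>\<phi> 1\<bar>"
  have \<phi>_bound: "-K \<le> \<phi> t \<and> \<phi> t \<le> K" if "0 \<le> t" "t \<le> 1" for t
    using mono_onD[OF \<phi>_mono, of 0 t] mono_onD[OF \<phi>_mono, of t 1] that
    by (auto simp: K_def)
  have increment: "\<bar>h y - h x\<bar> \<le> K * (y - x)" if "0 \<le> x" "x \<le> y" "y \<le> 1" for x y
  proof -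
    have "(y - x) * - K \<le> (y - x) * \<phi> x" "(y - x) * \<phi> y \<le> (y - x) * K"
      using \<phi>_bound[of x] \<phi>_bound[of y] that by (intro mult_left_mono; simp)+
    then show ?thesis
      unfolding abs_le_iff using slope_bounds[OF that] by (simp add: mult.commute)
  qed
  have "K-lipschitz_on {0..1} h"
  proof (rule lipschitz_onI)
    fix x y :: real assume "x \<in> {0..1}" "y \<in> {0..1}"
    then show "dist (h x) (h y) \<le> K * dist x y"
      using increment[of x y] increment[of y x]
      by (cases "x \<le> y") (auto simp: dist_real_def abs_minus_commute)
  qed (simp add: K_def)
  then have "continuous_on {a..1} h"
    by (rule continuous_on_subset[OF lipschitz_on_continuous_on]) (use assms in auto)
  then show ?thesis
    using assms by (intro continuous_intros) auto
qed

lemma ratio_mono_on_if_zero: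
  assumes "h 0 = 0"
  shows "mono_on {0<..1} (\<lambda>d. h d / d)"
proof (rule mono_onI)
  fix x y :: real assume "x \<in> {0<..1}" "y \<in> {0<..1}" "x \<le> y"
  moreover have "tangent_intercept x \<le> 0"
    using tangent_intercept_antimono[of 0 x] assms \<open>x \<in> {0<..1}\<close>
    by (simp add: tangent_intercept_def)
  ultimately show "h x / x \<le> h y / y"
    using ratio_le_if_intercept_nonpos[of x y] by (cases "x = y") auto
qed

lemma tangent_intercept_nonneg_near_0:
  assumes "0 < h 0"
  shows "\<exists>d\<in>{0<..1}. 0 \<le> tangent_intercept d"
proof
  define K where "K = \<phi> 1 - \<phi> 0"
  define d where "d = min 1 (h 0 / (K + 1))"
  have K: "0 \<le> K" using mono_onD[OF \<phi>_mono, of 0 1] by (simp add: K_def)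
  show d: "d \<in> {0<..1}" using assms K by (auto simp: d_def)
  have "d * K \<le> h 0 / (K + 1) * K" using K by (intro mult_right_mono) (auto simp: d_def)
  also have "\<dots> \<le> h 0" using assms K by (simp add: field_simps)
  finally have "d * \<phi> 1 \<le> h 0 + d * \<phi> 0" by (simp add: K_def algebra_simps)
  moreover have "d * \<phi> d \<le> d * \<phi> 1"
    using d by (intro mult_left_mono mono_onD[OF \<phi>_mono]) auto
  moreover have "h 0 + d * \<phi> 0 \<le> h d" using slope_bounds[of 0 d] d by simp
  ultimately show "0 \<le> tangent_intercept d" by (simp add: tangent_intercept_def)
qed

lemma tangent_intercept_sign_change:
  assumes "0 < h 0"
  obtains c where "0 < c" "c \<le> 1"
    and "\<And>d. 0 < d \<Longrightarrow> d < c \<Longrightarrow> 0 \<le> tangent_intercept d"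
    and "\<And>d. c < d \<Longrightarrow> d \<le> 1 \<Longrightarrow> tangent_intercept d < 0"
proof
  define S where "S = {d \<in> {0<..1}. 0 \<le> tangent_intercept d}"
  have bdd: "bdd_above S" by (auto simp: S_def bdd_above_def)
  obtain d0 where "d0 \<in> S"
    using tangent_intercept_nonneg_near_0[OF assms] by (auto simp: S_def)
  then show "0 < Sup S" "Sup S \<le> 1"
    using cSup_upper[OF _ bdd] cSup_least[of S 1] unfolding S_def by fastforce+
  show "0 \<le> tangent_intercept d" if d: "0 < d" "d < Sup S" for d
  proof -
    obtain d' where "d' \<in> S" "d < d'" using less_cSupD[of S d] \<open>d0 \<in> S\<close> d by blast
    then show ?thesis using tangent_intercept_antimono[of d d'] d by (auto simp: S_def)
  qed
  show "tangent_intercept d < 0" if "Sup S < d" "d \<le> 1" for d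
  proof (rule ccontr)
    assume "\<not> tangent_intercept d < 0"
    then have "d \<in> S" using that \<open>0 < Sup S\<close> by (simp add: S_def)
    then show False using cSup_upper[OF _ bdd, of d] that by simp
  qed
qed

lemma antimono_on_ratio_below:
  assumes c: "0 < c" "c \<le> 1" and intercept: "\<And>d. 0 < d \<Longrightarrow> d < c \<Longrightarrow> 0 \<le> tangent_intercept d"
  shows "antimono_on {0<..c} (\<lambda>d. h d / d)"
proof (rule monotone_onI)
  fix x y assume "x \<in> {0<..c}" "y \<in> {0<..c}" "x \<le> y"
  then consider "x = y" | "0 < x" "x < y" "y < c" | "0 < x" "x < c" "y = c" by force
  then show "h y / y \<le> h x / x"
  proof cases
    case 2
    then show ?thesis using ratio_ge_if_intercept_nonneg[of x y] intercept[of y] c by simp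
  next
    case 3
    have "((\<lambda>d. h d / d) \<longlongrightarrow> h c / c) (at_left c)"
      using 3 c by (intro continuous_on_Icc_at_leftD continuous_on_subset[OF continuous_on_ratio[of x]]) auto
    moreover have "\<forall>\<^sub>F z in at_left c. h z / z \<le> h x / x"
      using eventually_at_left_real[OF \<open>x < c\<close>]
      by eventually_elim (use 3 c in \<open>auto intro!: ratio_ge_if_intercept_nonneg intercept\<close>)
    ultimately show ?thesis using 3 by (auto intro: tendsto_upperbound)
  qed simp
qed

lemma mono_on_ratio_above:
  assumes c: "0 < c" "c \<le> 1" and intercept: "\<And>d. c < d \<Longrightarrow> d \<le> 1 \<Longrightarrow> tangent_intercept d \<le> 0"
  shows "mono_on {c..1} (\<lambda>d. h d / d)"
proof (rule mono_onI)
  fix x y assume "x \<in> {c..1}" "y \<in> {c..1}" "x \<le> y"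
  then consider "x = y" | "c < x" "x < y" "y \<le> 1" | "x = c" "c < y" "y \<le> 1" by force
  then show "h x / x \<le> h y / y"
  proof cases
    case 2
    then show ?thesis using ratio_le_if_intercept_nonpos[of x y] intercept[of x] c by simp
  next
    case 3
    have "((\<lambda>d. h d / d) \<longlongrightarrow> h c / c) (at_right c)"
      using 3 c by (intro continuous_on_Icc_at_rightD continuous_on_subset[OF continuous_on_ratio[of c]]) auto
    moreover have "\<forall>\<^sub>F z in at_right c. h z / z \<le> h y / y"
      using eventually_at_right_real[OF \<open>c < y\<close>]
      by eventually_elim (use 3 c in \<open>auto intro!: ratio_le_if_intercept_nonpos intercept\<close>)
    ultimately show ?thesis using 3 by (auto intro: tendsto_upperbound)
  qed simp
qed

lemma ratio_U_shaped_if_pos: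
  assumes "0 < h 0"
  shows "\<exists>c\<in>{0<..1}. antimono_on {0<..c} (\<lambda>d. h d / d) \<and> mono_on {c..1} (\<lambda>d. h d / d)"
proof -
  obtain c where c: "0 < c" "c \<le> 1"
    and left: "\<And>d. 0 < d \<Longrightarrow> d < c \<Longrightarrow> 0 \<le> tangent_intercept d"
    and right: "\<And>d. c < d \<Longrightarrow> d \<le> 1 \<Longrightarrow> tangent_intercept d < 0"
    using tangent_intercept_sign_change[OF assms] by blast
  have "antimono_on {0<..c} (\<lambda>d. h d / d)" by (rule antimono_on_ratio_below[OF c left])
  moreover have "mono_on {c..1} (\<lambda>d. h d / d)"
    by (rule mono_on_ratio_above[OF c less_imp_le[OF right]])
  ultimately show ?thesis using c by auto
qed

end

section \<open>Tail integrals of antitone functions\<close>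

lemma borel_measurable_antimono:
  fixes f :: "real \<Rightarrow> real"
  assumes "antimono f"
  shows "f \<in> borel_measurable borel"
proof -
  have "mono (\<lambda>x. - f x)" using assms by (auto simp: mono_def antimono_def)
  then have "(\<lambda>x. - (- f x)) \<in> borel_measurable borel"
    by (intro borel_measurable_uminus borel_measurable_mono)
  then show ?thesis by simp
qed

lemma set_integrable_Icc_antimono:
  fixes s :: "real \<Rightarrow> real"
  assumes "antimono s" "\<And>u. 0 \<le> s u"
  shows "set_integrable lborel {a..b} s"
proof (rule set_integrable_bound)
  show "set_integrable lborel {a..b} (\<lambda>_. s a)"
    by (simp add: set_integrable_def emeasure_lborel_Icc_eq)
  show "set_borel_measurable lborel {a..b} s"
    using borel_measurable_antimono[OF assms(1)] by (simp add: set_borel_measurable_def)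
  show "AE u in lborel. u \<in> {a..b} \<longrightarrow> norm (s u) \<le> norm (s a)"
    using assms by (auto simp: antimono_def)
qed

lemma set_integrable_Ici_antimono:
  fixes s :: "real \<Rightarrow> real"
  assumes "antimono s" "\<And>u. 0 \<le> s u" "set_integrable lborel {b..} s"
  shows "set_integrable lborel {a..} s"
proof -
  have "set_integrable lborel ({a..b} \<union> {b..}) s"
    by (intro set_integrable_Un set_integrable_Icc_antimono assms) auto
  then show ?thesis by (rule set_integrable_subset) auto
qed

lemma tail_integral_diff_bounds:
  fixes s :: "real \<Rightarrow> real"
  assumes anti: "antimono s" and nonneg: "\<And>u. 0 \<le> s u"
    and int: "set_integrable lborel {a..} s" and "a \<le> b"
  shows "(b - a) * s b \<le> (LINT u:{a..}|lborel. s u) - (LINT u:{b..}|lborel. s u)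
    \<and> (LINT u:{a..}|lborel. s u) - (LINT u:{b..}|lborel. s u) \<le> (b - a) * s a"
proof -
  have int_ab: "set_integrable lborel {a..<b} s"
    by (rule set_integrable_subset[OF set_integrable_Icc_antimono[OF anti nonneg, of a b]]) auto
  have const: "set_integrable lborel {a..<b} (\<lambda>_. c)" for c :: real
    using \<open>a \<le> b\<close> by (auto simp: set_integrable_def intro!: integrable_real_indicator)
  have "{a..} = {a..<b} \<union> {b..}" using \<open>a \<le> b\<close> by auto
  moreover have "(LINT u:{a..<b} \<union> {b..}|lborel. s u)
      = (LINT u:{a..<b}|lborel. s u) + (LINT u:{b..}|lborel. s u)"
    by (rule set_integral_Un[OF _ int_ab set_integrable_subset[OF int]]) (use \<open>a \<le> b\<close> in auto)
  ultimately have "(LINT u:{a..}|lborel. s u) - (LINT u:{b..}|lborel. s u) = (LINT u:{a..<b}|lborel. s u)"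
    by simp
  moreover have "(LINT u:{a..<b}|lborel. s b) \<le> (LINT u:{a..<b}|lborel. s u)"
    "(LINT u:{a..<b}|lborel. s u) \<le> (LINT u:{a..<b}|lborel. s a)"
    using anti by (auto intro!: set_integral_mono const int_ab simp: antimono_def)
  moreover have "(LINT u:{a..<b}|lborel. c) = (b - a) * c" for c :: real
    using \<open>a \<le> b\<close> by (simp add: set_integral_const)
  ultimately show ?thesis by (simp add: mult.commute)
qed

lemma tail_integral_eq_0_if_zero:
  fixes s :: "real \<Rightarrow> real"
  assumes anti: "antimono s" and nonneg: "\<And>u. 0 \<le> s u" and "s a = 0"
  shows "(LINT u:{a..}|lborel. s u) = 0"
proof -
  have "s u = 0" if "a \<le> u" for u
    using nonneg[of u] antimonoD[OF anti that] \<open>s a = 0\<close> by simp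
  then have "(\<lambda>u. indicator {a..} u *\<^sub>R s u) = (\<lambda>_. 0 :: real)"
    by (auto simp: indicator_def)
  then show ?thesis by (simp add: set_lebesgue_integral_def)
qed

lemma tail_integral_pos_if_pos:
  fixes s :: "real \<Rightarrow> real"
  assumes anti: "antimono s" and nonneg: "\<And>u. 0 \<le> s u"
    and int: "set_integrable lborel {a..} s"
    and right_cont: "continuous (at_right a) s" and "0 < s a"
  shows "0 < (LINT u:{a..}|lborel. s u)"
proof -
  have "\<forall>\<^sub>F u in at_right a. 0 < s u"
    using right_cont \<open>0 < s a\<close> by (intro order_tendstoD(1)) (simp_all add: continuous_within)
  then obtain b where "a < b" "0 < s b"
    using eventually_happens'[OF trivial_limit_at_right_real
        eventually_conj[OF _ eventually_at_right_real[of a "a + 1"]]]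
    by fastforce
  then have "0 < (b - a) * s b" by simp
  also have "\<dots> \<le> (LINT u:{a..}|lborel. s u) - (LINT u:{b..}|lborel. s u)"
    using tail_integral_diff_bounds[OF anti nonneg int, of b] \<open>a < b\<close> by simp
  moreover have "0 \<le> (LINT u:{b..}|lborel. s u)"
    unfolding set_lebesgue_integral_def by (rule integral_nonneg_AE) (simp add: nonneg)
  ultimately show ?thesis by linarith
qed

lemma tail_average_shape:
  fixes s :: "real \<Rightarrow> real"
  assumes anti: "antimono s" and nonneg: "\<And>u. 0 \<le> s u"
    and right_cont: "continuous (at_right 1) s"
  defines "m \<equiv> \<lambda>\<delta>. (LINT u:{1 - \<delta>..}|lborel. s u) / \<delta>"
  shows "(s 1 = 0 \<longrightarrow> mono_on {0<..1} m)
    \<and> (0 < s 1 \<longrightarrow> (\<exists>c\<in>{0<..1}. antimono_on {0<..c} m \<and> mono_on {c..1} m))"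
proof (cases "set_integrable lborel {0..} s")
  case False
  then have "\<not> set_integrable lborel {x..} s" for x
    using set_integrable_Ici_antimono[OF anti nonneg] by blast
  \<comment> \<open>then every tail integral is the junk value \<open>0\<close>\<close>
  then have "m = (\<lambda>_. 0)"
    by (simp add: m_def set_lebesgue_integral_def set_integrable_def not_integrable_integral_eq)
  then show ?thesis by (auto intro!: monotone_onI bexI[of _ 1])
next
  case True
  define H where "H x = (LINT u:{x..}|lborel. s u)" for x
  have int: "set_integrable lborel {x..} s" for x
    by (rule set_integrable_Ici_antimono[OF anti nonneg True])
  have \<phi>_mono: "mono_on {0..1} (\<lambda>d. s (1 - d))"
    using anti by (auto intro!: mono_onI simp: antimono_def)
  have slope_bounds: "(y - x) * s (1 - x) \<le> H (1 - y) - H (1 - x)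
      \<and> H (1 - y) - H (1 - x) \<le> (y - x) * s (1 - y)" if "0 \<le> x" "x \<le> y" "y \<le> 1" for x y
    using tail_integral_diff_bounds[OF anti nonneg int, of "1 - y" "1 - x"] that by (simp add: H_def)
  have m_eq: "m = (\<lambda>d. H (1 - d) / d)" by (simp add: m_def H_def)
  show ?thesis
  proof (intro conjI impI)
    assume "s 1 = 0"
    then have "H (1 - 0) = 0" unfolding H_def by (simp add: tail_integral_eq_0_if_zero[OF anti nonneg])
    then show "mono_on {0<..1} m"
      unfolding m_eq by (intro ratio_mono_on_if_zero[OF \<phi>_mono slope_bounds]) simp_all
  next
    assume "0 < s 1"
    then have "0 < H (1 - 0)" unfolding H_def by (simp add: tail_integral_pos_if_pos[OF anti nonneg int right_cont])
    then show "\<exists>c\<in>{0<..1}. antimono_on {0<..c} m \<and> mono_on {c..1} m"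
      unfolding m_eq by (intro ratio_U_shaped_if_pos[OF \<phi>_mono slope_bounds]) simp_all
  qed
qed

lemma measure_Collect_greater_eq_cdf:
  fixes f :: "'a \<Rightarrow> real"
  assumes "finite_measure M" "f \<in> borel_measurable M"
  shows "measure M {x \<in> space M. u < f x} = measure M (space M) - cdf (distr M borel f) u"
proof -
  have "{x \<in> space M. u < f x} = space M - (f -` {..u} \<inter> space M)" by auto
  moreover have "f -` {..u} \<inter> space M \<in> sets M" using assms(2) by measurable
  ultimately show ?thesis
    using assms by (simp add: finite_measure.finite_measure_compl cdf_def measure_distr)
qed

lemma survival_function_properties:
  fixes f :: "'a \<Rightarrow> real"
  assumes "finite_measure M" "f \<in> borel_measurable M"
  defines "s \<equiv> \<lambda>u. measure M {x \<in> space M. u < f x}"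
  shows "antimono s" and "continuous (at_right a) s"
proof -
  interpret law: finite_borel_measure "distr M borel f"
    using assms by (intro finite_borel_measure.intro finite_measure.finite_measure_distr)
      (simp_all add: finite_borel_measure_axioms_def)
  have s_eq: "s = (\<lambda>u. measure M (space M) - cdf (distr M borel f) u)"
    using measure_Collect_greater_eq_cdf[OF assms(1,2)] by (simp add: s_def)
  show "antimono s"
    unfolding s_eq by (intro antimonoI diff_left_mono law.cdf_nondecreasing)
  show "continuous (at_right a) s"
    unfolding s_eq by (intro continuous_intros law.cdf_is_right_cont)
qed

lemma exp_neg_norm_sq_half_eq_prod:
  fixes z :: "'a::euclidean_space"
  shows "exp (- (norm z)\<^sup>2 / 2) = (\<Prod>b\<in>Basis. exp (- (z \<bullet> b)\<^sup>2 / 2))"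
proof -
  have "(norm z)\<^sup>2 = (\<Sum>b\<in>Basis. (z \<bullet> b)\<^sup>2)"
    unfolding power2_norm_eq_inner by (subst euclidean_inner) (simp add: power2_eq_square)
  then have "- (norm z)\<^sup>2 / 2 = (\<Sum>b\<in>Basis. - (z \<bullet> b)\<^sup>2 / 2)"
    by (simp add: sum_divide_distrib sum_negf)
  then show ?thesis by (simp add: exp_sum)
qed

lemma nn_integral_exp_neg_sq_half_finite: "(\<integral>\<^sup>+t. ennreal (exp (- t\<^sup>2 / 2)) \<partial>lborel) < \<infinity>"
proof -
  have "integrable lborel (\<lambda>t. sqrt (2 * pi) * std_normal_density t)"
    by (intro integrable_mult_right integrable_normal_density) auto
  moreover have "(\<lambda>t. sqrt (2 * pi) * std_normal_density t) = (\<lambda>t. exp (- t\<^sup>2 / 2))"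
    by (auto simp: std_normal_density_def)
  ultimately have "integrable lborel (\<lambda>t::real. exp (- t\<^sup>2 / 2))" by simp
  then show ?thesis by (simp add: integrable_iff_bounded)
qed

lemma finite_measure_std_gauss: "finite_measure (std_gauss :: 'a::euclidean_space measure)"
proof (rule finite_measureI)
  define K :: real where "K = (2 * pi) powr (- real DIM('a) / 2)"
  have "emeasure (std_gauss :: 'a measure) (space std_gauss)
      = (\<integral>\<^sup>+z. ennreal (K * exp (- (norm (z::'a))\<^sup>2 / 2)) \<partial>lborel)"
    unfolding std_gauss_def K_def by (simp add: emeasure_density)
  also have "\<dots> = ennreal K * (\<integral>\<^sup>+z. ennreal (exp (- (norm (z::'a))\<^sup>2 / 2)) \<partial>lborel)"
    by (simp add: K_def ennreal_mult nn_integral_cmult)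
  also have "(\<integral>\<^sup>+z. ennreal (exp (- (norm (z::'a))\<^sup>2 / 2)) \<partial>lborel)
      = (\<integral>\<^sup>+z. (\<Prod>b\<in>(Basis::'a set). (\<lambda>t. ennreal (exp (- t\<^sup>2 / 2))) (z \<bullet> b)) \<partial>lborel)"
    unfolding exp_neg_norm_sq_half_eq_prod by (simp add: prod_ennreal)
  also have "\<dots> = (\<Prod>b\<in>(Basis::'a set). \<integral>\<^sup>+t. ennreal (exp (- t\<^sup>2 / 2)) \<partial>lborel)"
    by (rule nn_integral_lborel_prod) auto
  finally show "emeasure (std_gauss :: 'a measure) (space std_gauss) \<noteq> \<infinity>"
    using nn_integral_exp_neg_sq_half_finite
    by (simp add: ennreal_mult_eq_top_iff less_top[symmetric] power_eq_top_ennreal)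
qed

lemma sets_std_gauss: "sets (std_gauss :: 'a::euclidean_space measure) = sets borel"
  by (simp add: std_gauss_def)

section \<open>Measurability of the localization function\<close>

lemma onorm_gt_iff_dense:
  fixes f :: "'a::euclidean_space \<Rightarrow> 'b::real_normed_vector" and D :: "'a set"
  assumes bl: "bounded_linear f"
    and dense: "\<And>X. open X \<Longrightarrow> X \<noteq> {} \<Longrightarrow> \<exists>d\<in>D. d \<in> X"
  shows "u < onorm f \<longleftrightarrow> (\<exists>v\<in>D. u * norm v < norm (f v))"
proof
  assume "u < onorm f"
  then have "\<not> (\<forall>x. norm (f x) \<le> u * norm x)" using onorm_le[of f u] by force
  then obtain x where x: "u * norm x < norm (f x)" by (auto simp: not_le)
  have "open {v. u * norm v < norm (f v)}"
    using linear_continuous_on[OF bl] by (intro open_Collect_less continuous_intros) auto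
  then show "\<exists>v\<in>D. u * norm v < norm (f v)" using dense x by blast
next
  assume "\<exists>v\<in>D. u * norm v < norm (f v)"
  then obtain v where v: "u * norm v < norm (f v)" by blast
  then have "0 < norm v" using bl by (auto simp: linear_simps)
  moreover have "u * norm v < onorm f * norm v" using v onorm[OF bl, of v] by linarith
  ultimately show "u < onorm f" by simp
qed

lemma post_weight_le: "post_weight r y x \<le> exp ((norm y)\<^sup>2 / 2)"
proof -
  have "(norm (y - r *\<^sub>R x))\<^sup>2 = (norm y)\<^sup>2 - 2 * r * (x \<bullet> y) + r\<^sup>2 * (norm x)\<^sup>2"
    unfolding power2_norm_eq_inner
    by (simp add: inner_diff_left inner_diff_right inner_commute algebra_simps power2_eq_square)
  then have "r * (x \<bullet> y) - r\<^sup>2 * (norm x)\<^sup>2 / 2 \<le> (norm y)\<^sup>2 / 2"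
    using zero_le_power2[of "norm (y - r *\<^sub>R x)"] by simp
  then show ?thesis unfolding post_weight_def by simp
qed

lemma post_weight_pos: "0 < post_weight r y x"
  unfolding post_weight_def by simp

lemma norm_inner_scaleR_le:
  fixes v a :: "'a::real_inner"
  shows "norm ((v \<bullet> a) *\<^sub>R a) \<le> norm v * (norm a)\<^sup>2"
proof -
  have "norm ((v \<bullet> a) *\<^sub>R a) = \<bar>v \<bullet> a\<bar> * norm a" by simp
  also have "\<dots> \<le> (norm v * norm a) * norm a"
    by (intro mult_right_mono) (auto simp: Cauchy_Schwarz_ineq2)
  finally show ?thesis by (simp add: power2_eq_square mult_ac)
qed

lemma norm_scaleR_diff_sq_le:
  fixes x m :: "'a::real_normed_vector"
  shows "(norm (r *\<^sub>R x - m))\<^sup>2 \<le> 2 * r\<^sup>2 * (norm x)\<^sup>2 + 2 * (norm m)\<^sup>2"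
proof -
  have "norm (r *\<^sub>R x - m) \<le> \<bar>r\<bar> * norm x + norm m"
    using norm_triangle_ineq4[of "r *\<^sub>R x" m] by simp
  then have "(norm (r *\<^sub>R x - m))\<^sup>2 \<le> (\<bar>r\<bar> * norm x + norm m)\<^sup>2"
    by (intro power_mono) auto
  also have "\<dots> \<le> 2 * r\<^sup>2 * (norm x)\<^sup>2 + 2 * (norm m)\<^sup>2"
    using sum_squares_ge_zero[of "\<bar>r\<bar> * norm x - norm m" 0]
    by (simp add: power2_eq_square algebra_simps)
  finally show ?thesis .
qed

context
  fixes \<mu> :: "'a::euclidean_space measure" and r :: real
  assumes prob: "prob_space \<mu>" and sets_\<mu>: "sets \<mu> = sets borel"
    and second_moment: "integrable \<mu> (\<lambda>x. (norm x)\<^sup>2)"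
begin

definition post_norm :: "'a \<Rightarrow> real" where
  "post_norm y = (\<integral>x. post_weight r y x \<partial>\<mu>)"

definition post_dens :: "'a \<Rightarrow> 'a \<Rightarrow> real" where
  "post_dens y x = post_weight r y x / post_norm y"

definition post_mean :: "'a \<Rightarrow> 'a" where
  "post_mean y = (\<integral>x. post_dens y x *\<^sub>R (r *\<^sub>R x) \<partial>\<mu>)"

definition post_cov :: "'a \<Rightarrow> 'a \<Rightarrow> 'a" where
  "post_cov y v = (\<integral>x. post_dens y x *\<^sub>R
      ((v \<bullet> (r *\<^sub>R x - post_mean y)) *\<^sub>R (r *\<^sub>R x - post_mean y)) \<partial>\<mu>)"

lemma measurable_borel_pair_\<mu>_eq: "measurable (borel \<Otimes>\<^sub>M \<mu>) N = measurable (borel \<Otimes>\<^sub>M borel) N"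
  by (rule measurable_cong_sets) (auto intro!: sets_pair_measure_cong simp: sets_\<mu>)

lemma measurable_\<mu>_eq: "measurable \<mu> N = measurable borel N"
  by (rule measurable_cong_sets) (auto simp: sets_\<mu>)

lemma borel_measurable_post_norm[measurable]: "post_norm \<in> borel_measurable borel"
proof -
  interpret prob_space \<mu> by (rule prob)
  have "(\<lambda>p. post_weight r (fst p) (snd p)) \<in> borel_measurable (borel \<Otimes>\<^sub>M borel)"
    unfolding post_weight_def by measurable
  then show ?thesis unfolding post_norm_def
    by (intro borel_measurable_lebesgue_integral) (simp add: measurable_borel_pair_\<mu>_eq case_prod_beta')
qed

lemma borel_measurable_post_dens[measurable]:
  "(\<lambda>p. post_dens (fst p) (snd p)) \<in> borel_measurable (borel \<Otimes>\<^sub>M borel)"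
  unfolding post_dens_def post_weight_def by measurable

lemma borel_measurable_post_dens_slice[measurable]: "post_dens y \<in> borel_measurable borel"
  unfolding post_dens_def post_weight_def by measurable

lemma borel_measurable_post_mean[measurable]: "post_mean \<in> borel_measurable borel"
proof -
  interpret prob_space \<mu> by (rule prob)
  show ?thesis unfolding post_mean_def
    by (intro borel_measurable_lebesgue_integral) (simp add: measurable_borel_pair_\<mu>_eq case_prod_beta')
qed

lemma borel_measurable_post_cov[measurable]: "(\<lambda>y. post_cov y v) \<in> borel_measurable borel"
proof -
  interpret prob_space \<mu> by (rule prob)
  show ?thesis unfolding post_cov_def
    by (intro borel_measurable_lebesgue_integral) (simp add: measurable_borel_pair_\<mu>_eq case_prod_beta')
qed

lemma post_norm_nonneg: "0 \<le> post_norm y"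
  unfolding post_norm_def by (intro integral_nonneg_AE) (simp add: post_weight_pos less_imp_le)

lemma post_dens_nonneg: "0 \<le> post_dens y x"
  unfolding post_dens_def using post_norm_nonneg post_weight_pos[of r y x] by simp

lemma post_dens_le: "post_dens y x \<le> exp ((norm y)\<^sup>2 / 2) / post_norm y"
  unfolding post_dens_def using post_norm_nonneg by (intro divide_right_mono post_weight_le)

lemma integrable_post_cov_integrand:
  "integrable \<mu> (\<lambda>x. post_dens y x *\<^sub>R ((v \<bullet> (r *\<^sub>R x - post_mean y)) *\<^sub>R (r *\<^sub>R x - post_mean y)))"
proof (rule Bochner_Integration.integrable_bound)
  interpret prob_space \<mu> by (rule prob)
  define K where "K = exp ((norm y)\<^sup>2 / 2) / post_norm y"
  define g where "g x = K * norm v * (2 * r\<^sup>2 * (norm x)\<^sup>2 + 2 * (norm (post_mean y))\<^sup>2)" for x :: 'a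
  show "integrable \<mu> g"
    unfolding g_def using second_moment by (intro integrable_mult_right integrable_add integrable_const) auto
  show "(\<lambda>x. post_dens y x *\<^sub>R ((v \<bullet> (r *\<^sub>R x - post_mean y)) *\<^sub>R (r *\<^sub>R x - post_mean y)))
      \<in> borel_measurable \<mu>"
    unfolding measurable_\<mu>_eq by measurable
  have "norm (post_dens y x *\<^sub>R ((v \<bullet> (r *\<^sub>R x - post_mean y)) *\<^sub>R (r *\<^sub>R x - post_mean y)))
      \<le> norm (g x)" for x
  proof -
    have "norm ((v \<bullet> (r *\<^sub>R x - post_mean y)) *\<^sub>R (r *\<^sub>R x - post_mean y))
        \<le> norm v * (2 * r\<^sup>2 * (norm x)\<^sup>2 + 2 * (norm (post_mean y))\<^sup>2)"
      by (rule order_trans[OF norm_inner_scaleR_le mult_left_mono[OF norm_scaleR_diff_sq_le]]) simp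
    moreover have "post_dens y x \<le> K" unfolding K_def by (rule post_dens_le)
    moreover have "0 \<le> K" unfolding K_def using post_norm_nonneg by simp
    ultimately show ?thesis
      using post_dens_nonneg[of y x] by (simp add: g_def abs_mult mult.assoc mult_mono)
  qed
  then show "AE x in \<mu>. norm (post_dens y x *\<^sub>R ((v \<bullet> (r *\<^sub>R x - post_mean y)) *\<^sub>R
      (r *\<^sub>R x - post_mean y))) \<le> norm (g x)"
    by simp
qed

lemma bounded_linear_post_cov: "bounded_linear (post_cov y)"
proof -
  have "linear (post_cov y)"
  proof
    fix v w :: 'a
    have "post_cov y (v + w) = (\<integral>x. post_dens y x *\<^sub>R ((v \<bullet> (r *\<^sub>R x - post_mean y)) *\<^sub>R (r *\<^sub>R x - post_mean y))
        + post_dens y x *\<^sub>R ((w \<bullet> (r *\<^sub>R x - post_mean y)) *\<^sub>R (r *\<^sub>R x - post_mean y)) \<partial>\<mu>)"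
      unfolding post_cov_def
      by (intro Bochner_Integration.integral_cong) (auto simp: inner_add_left scaleR_add_left scaleR_add_right)
    also have "\<dots> = post_cov y v + post_cov y w"
      unfolding post_cov_def
      by (rule Bochner_Integration.integral_add[OF integrable_post_cov_integrand integrable_post_cov_integrand])
    finally show "post_cov y (v + w) = post_cov y v + post_cov y w" .
  next
    fix c :: real and v :: 'a
    show "post_cov y (c *\<^sub>R v) = c *\<^sub>R post_cov y v"
      unfolding post_cov_def by (simp add: mult.left_commute flip: integral_scaleR_right)
  qed
  then show ?thesis by (simp add: linear_conv_bounded_linear)
qed

lemma loc_fun_eq_onorm_post_cov: "loc_fun \<mu> r y = onorm (post_cov y)"
proof -
  have post: "posterior \<mu> r y = density \<mu> (\<lambda>x. ennreal (post_dens y x))"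
    unfolding posterior_def post_dens_def post_norm_def ..
  have mean: "(\<integral>x. r *\<^sub>R x \<partial>posterior \<mu> r y) = post_mean y"
    unfolding post post_mean_def
    by (rule integral_density) (auto simp: measurable_\<mu>_eq post_dens_nonneg)
  have "cov_op (posterior \<mu> r y) (\<lambda>x. r *\<^sub>R x) v = post_cov y v" for v
    unfolding cov_op_def mean unfolding post post_cov_def
    by (rule integral_density) (auto simp: measurable_\<mu>_eq post_dens_nonneg)
  then show ?thesis unfolding loc_fun_def by (metis ext)
qed

lemma borel_measurable_loc_fun: "loc_fun \<mu> r \<in> borel_measurable borel"
proof -
  obtain D :: "'a set" where D: "countable D" "\<And>X. open X \<Longrightarrow> X \<noteq> {} \<Longrightarrow> \<exists>d\<in>D. d \<in> X"
    using countable_dense_exists by blast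
  have "{y \<in> space borel. u < loc_fun \<mu> r y}
      = (\<Union>v\<in>D. {y \<in> space borel. u * norm v < norm (post_cov y v)})" for u
    unfolding loc_fun_eq_onorm_post_cov
    using onorm_gt_iff_dense[OF bounded_linear_post_cov D(2)] by auto
  also have "\<dots> u \<in> sets borel" for u
  proof -
    have "{y \<in> space borel. u * norm v < norm (post_cov y v)} \<in> sets borel" for v by measurable
    then show ?thesis by (intro sets.countable_UN'[OF D(1)]) auto
  qed
  finally show ?thesis by (subst borel_measurable_iff_greater) auto
qed

end

theorem mainTheorem10:
  fixes \<mu> :: "'a::euclidean_space measure" and r :: real
  assumes "prob_space \<mu>" and "sets \<mu> = sets borel"
    and "integrable \<mu> (\<lambda>x. (norm x)\<^sup>2)"
    and "r \<ge> 0"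
  shows "(surv \<mu> r 1 = 0 \<longrightarrow> mono_on {0<..1} (\<lambda>\<delta>. m_fun \<mu> \<delta> r))
    \<and> (surv \<mu> r 1 > 0 \<longrightarrow>
         (antimono_on {0<..1} (\<lambda>\<delta>. m_fun \<mu> \<delta> r)
          \<or> (\<exists>c\<in>{0<..1}. antimono_on {0<..c} (\<lambda>\<delta>. m_fun \<mu> \<delta> r)
                         \<and> mono_on {c..1} (\<lambda>\<delta>. m_fun \<mu> \<delta> r))))"
proof -
  define PM where "PM = \<mu> \<Otimes>\<^sub>M (std_gauss :: 'a measure)"
  define F where "F p = loc_fun \<mu> r (r *\<^sub>R fst p + snd p)" for p :: "'a \<times> 'a"
  have PM: "finite_measure PM"
    unfolding PM_def using prob_space.finite_measure[OF assms(1)]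
    by (intro finite_measure_pair_measure finite_measure_std_gauss)
  have "F \<in> borel_measurable (borel \<Otimes>\<^sub>M borel)"
    using borel_measurable_loc_fun[OF assms(1-3)] unfolding F_def by measurable
  then have F: "F \<in> borel_measurable PM"
    unfolding PM_def
    by (subst measurable_cong_sets[OF sets_pair_measure_cong[OF assms(2) sets_std_gauss] refl])
  have "surv \<mu> r = (\<lambda>u. measure PM {p \<in> space PM. u < F p})"
    by (simp add: surv_def PM_def F_def fun_eq_iff)
  then have "antimono (surv \<mu> r)" "continuous (at_right 1) (surv \<mu> r)"
    using survival_function_properties[OF PM F] by simp_all
  moreover have "(\<lambda>\<delta>. m_fun \<mu> \<delta> r) = (\<lambda>\<delta>. (LINT u:{1 - \<delta>..}|lborel. surv \<mu> r u) / \<delta>)"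
    by (simp add: m_fun_def h_fun_def)
  ultimately show ?thesis
    using tail_average_shape[of "surv \<mu> r"] by (simp add: surv_def)
qed

end
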